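(* Let $C$ be an $(n,k)$ linear code over $H(\mathbb{Z})_{2+e_1}$. If $C$ corrects all errors of Lipschitz weight $2$ or less, then $(5^2)^{n-k}\ge 32n^2-8n+1$.
   Context: $H(\mathbb{Z})=\{a_0+a_1e_1+a_2e_2+a_3e_3:a_i\in\mathbb{Z}\}$ (Lipschitz integers) with quaternion multiplication $e_1^2=e_2^2=e_3^2=-1$, $e_1e_2=-e_2e_1=e_3$, $e_3e_1=-e_1e_3=e_2$, $e_2e_3=-e_3e_2=e_1$; $N(q)=a_0^2+a_1^2+a_2^2+a_3^2$. Right congruence: $q_1\equiv_r q_2 \pmod\pi$ iff $q_1-q_2=\delta\pi$ for some $\delta\in H(\mathbb{Z})$; $H(\mathbb{Z})_\pi=H(\mathbb{Z})/H(\mathbb{Z})\pi$, which has $N(\pi)^2$ elements (here $N(2+e_1)=5$). The Lipschitz weight of a class $\gamma$ is $\min\{|a_0|+|a_1|+|a_2|+|a_3| : a_0+a_1e_1+a_2e_2+a_3e_3\in\gamma\}$; the weight of a vector is the sum of the weights of its components. An $(n,k)$ linear code over $H(\mathbb{Z})_\pi$ is an additive subgroup $C\subseteq H(\mathbb{Z})_\pi^n$ such that $H(\mathbb{Z})_\pi^n/C$ has exactly $(N(\pi)^2)^{n-k}$ cosets. $C$ corrects all errors of weight $t$ or less if all vectors of Lipschitz weight at most $t$ lie in pairwise distinct cosets of $C$. *)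

theory Defs
  imports Main
begin

text \<open>Lipschitz integers a0 + a1 e1 + a2 e2 + a3 e3, represented as integer quadruples.\<close>
type_synonym lip = "int \<times> int \<times> int \<times> int"

fun lip_add :: "lip \<Rightarrow> lip \<Rightarrow> lip" where
  "lip_add (a0,a1,a2,a3) (b0,b1,b2,b3) = (a0+b0, a1+b1, a2+b2, a3+b3)"

fun lip_neg :: "lip \<Rightarrow> lip" where
  "lip_neg (a0,a1,a2,a3) = (-a0, -a1, -a2, -a3)"

definition lip_diff :: "lip \<Rightarrow> lip \<Rightarrow> lip" where
  "lip_diff a b = lip_add a (lip_neg b)"

text \<open>Quaternion product: e1^2=e2^2=e3^2=-1, e1e2=e3, e2e3=e1, e3e1=e2.\<close>
fun lip_mult :: "lip \<Rightarrow> lip \<Rightarrow> lip" where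
  "lip_mult (a0,a1,a2,a3) (b0,b1,b2,b3) =
     (a0*b0 - a1*b1 - a2*b2 - a3*b3,
      a0*b1 + a1*b0 + a2*b3 - a3*b2,
      a0*b2 - a1*b3 + a2*b0 + a3*b1,
      a0*b3 + a1*b2 - a2*b1 + a3*b0)"

definition rcong :: "lip \<Rightarrow> lip \<Rightarrow> lip \<Rightarrow> bool" where
  "rcong \<pi> q1 q2 \<longleftrightarrow> (\<exists>\<delta>. lip_diff q1 q2 = lip_mult \<delta> \<pi>)"

definition lip_class :: "lip \<Rightarrow> lip \<Rightarrow> lip set" where
  "lip_class \<pi> q = {q'. rcong \<pi> q' q}"

definition Hpi :: "lip \<Rightarrow> lip set set" where
  "Hpi \<pi> = range (lip_class \<pi>)"

text \<open>Addition of classes (Minkowski sum of classes = class of the sum).\<close>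
definition cls_add :: "lip set \<Rightarrow> lip set \<Rightarrow> lip set" where
  "cls_add A B = {lip_add a b | a b. a \<in> A \<and> b \<in> B}"

definition cls_neg :: "lip set \<Rightarrow> lip set" where
  "cls_neg A = lip_neg ` A"

definition Hpi_vec :: "lip \<Rightarrow> nat \<Rightarrow> lip set list set" where
  "Hpi_vec \<pi> n = {v. length v = n \<and> set v \<subseteq> Hpi \<pi>}"

definition vec_add :: "lip set list \<Rightarrow> lip set list \<Rightarrow> lip set list" where
  "vec_add u v = map2 cls_add u v"

definition vec_neg :: "lip set list \<Rightarrow> lip set list" where
  "vec_neg v = map cls_neg v"

definition vec_zero :: "lip \<Rightarrow> nat \<Rightarrow> lip set list" where
  "vec_zero \<pi> n = replicate n (lip_class \<pi> (0,0,0,0))"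

definition additive_subgroup :: "lip \<Rightarrow> nat \<Rightarrow> lip set list set \<Rightarrow> bool" where
  "additive_subgroup \<pi> n C \<longleftrightarrow> C \<subseteq> Hpi_vec \<pi> n \<and> vec_zero \<pi> n \<in> C \<and>
     (\<forall>u\<in>C. \<forall>v\<in>C. vec_add u v \<in> C) \<and> (\<forall>u\<in>C. vec_neg u \<in> C)"

definition vcoset :: "lip set list set \<Rightarrow> lip set list \<Rightarrow> lip set list set" where
  "vcoset C v = {vec_add v c | c. c \<in> C}"


fun lip_N :: "lip \<Rightarrow> int" where
  "lip_N (a0,a1,a2,a3) = a0^2 + a1^2 + a2^2 + a3^2"

definition linear_code :: "lip \<Rightarrow> nat \<Rightarrow> nat \<Rightarrow> lip set list set \<Rightarrow> bool" where
  "linear_code \<pi> n k C \<longleftrightarrow> additive_subgroup \<pi> n C \<and>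
     int (card (vcoset C ` Hpi_vec \<pi> n)) = (lip_N \<pi> ^ 2) ^ (n - k)"

fun lip_abs_sum :: "lip \<Rightarrow> nat" where
  "lip_abs_sum (a0,a1,a2,a3) = nat \<bar>a0\<bar> + nat \<bar>a1\<bar> + nat \<bar>a2\<bar> + nat \<bar>a3\<bar>"

definition cls_weight :: "lip set \<Rightarrow> nat" where
  "cls_weight \<gamma> = (LEAST w. \<exists>a\<in>\<gamma>. lip_abs_sum a = w)"

definition vec_weight :: "lip set list \<Rightarrow> nat" where
  "vec_weight v = sum_list (map cls_weight v)"

definition corrects :: "lip \<Rightarrow> nat \<Rightarrow> lip set list set \<Rightarrow> nat \<Rightarrow> bool" where
  "corrects \<pi> n C t \<longleftrightarrow> (\<forall>u\<in>Hpi_vec \<pi> n. \<forall>v\<in>Hpi_vec \<pi> n.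
      vec_weight u \<le> t \<longrightarrow> vec_weight v \<le> t \<longrightarrow> u \<noteq> v \<longrightarrow> vcoset C u \<noteq> vcoset C v)"

end

theory Submission imports Defs begin

(*
  1. Right congruence modulo 2 + e1 is detected by the residue map
     a0 + a1 e1 + a2 e2 + a3 e3  |->  ((2 a0 + a1) mod 5, (2 a2 - a3) mod 5),
     so the 25 classes of H(Z)_pi correspond to the pairs in {0..4} x {0..4}.
  2. Counting: among the lists of length n of such pairs, where a pair has weight
     0, 1 or 2 according to how many of its entries are non-zero, exactly
     32 n^2 - 8 n + 1 have total weight at most 2 (a recurrence on n).
  3. Each pair has a representative whose coordinate sum of absolute values equals
     its weight; this maps the lists of step 2 injectively to vectors of Lipschitz
     weight at most 2 in H(Z)_pi^n.
  4. A code correcting all errors of weight at most t places the vectors of weight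
     at most t in distinct cosets, so there are at least as many cosets as such
     vectors; for an (n,k) code there are 25^(n-k) cosets.
*)

definition residue :: "lip \<Rightarrow> nat \<times> nat" where
  "residue q = (case q of (a,b,c,d) \<Rightarrow> (nat ((2*a+b) mod 5), nat ((2*c-d) mod 5)))"

lemma right_multiple_iff:
  "(\<exists>\<delta>. (x0,x1,x2,x3) = lip_mult \<delta> (2,1,0,0)) \<longleftrightarrow>
     (5::int) dvd 2*x0 + x1 \<and> (5::int) dvd 2*x2 - x3"
proof
  assume "(5::int) dvd 2*x0 + x1 \<and> (5::int) dvd 2*x2 - x3"
  then obtain k m where k: "2*x0 + x1 = 5*k" and m: "2*x2 - x3 = 5*m"
    by (auto elim!: dvdE)
  have "(x0,x1,x2,x3) = lip_mult (k, 2*k - x0, m, x2 - 2*m) (2,1,0,0)"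
    using k m by (simp add: algebra_simps)
  then show "\<exists>\<delta>. (x0,x1,x2,x3) = lip_mult \<delta> (2,1,0,0)" ..
next
  assume "\<exists>\<delta>. (x0,x1,x2,x3) = lip_mult \<delta> (2,1,0,0)"
  then obtain d0 d1 d2 d3 where "(x0,x1,x2,x3) = lip_mult (d0,d1,d2,d3) (2,1,0,0)"
    by (metis prod_cases4)
  then have "2*x0 + x1 = 5*d0" "2*x2 - x3 = 5*d2" by auto
  then show "(5::int) dvd 2*x0 + x1 \<and> (5::int) dvd 2*x2 - x3" by simp
qed

lemma rcong_residue: "rcong (2,1,0,0) q q' \<longleftrightarrow> residue q = residue q'"
proof -
  obtain a b c d a' b' c' d' where q: "q = (a,b,c,d)" and q': "q' = (a',b',c',d')"
    by (metis prod_cases4)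
  have "lip_diff q q' = (a-a', b-b', c-c', d-d')"
    by (simp add: lip_diff_def q q')
  then have "rcong (2,1,0,0) q q' \<longleftrightarrow>
      (5::int) dvd 2*(a-a') + (b-b') \<and> (5::int) dvd 2*(c-c') - (d-d')"
    unfolding rcong_def by (simp only: right_multiple_iff)
  also have "\<dots> \<longleftrightarrow> (2*a+b) mod 5 = (2*a'+b') mod (5::int) \<and> (2*c-d) mod 5 = (2*c'-d') mod (5::int)"
    by (simp add: mod_eq_dvd_iff algebra_simps)
  also have "\<dots> \<longleftrightarrow> residue q = residue q'"
    by (simp add: residue_def q q' nat_eq_iff)
  finally show ?thesis .
qed

lemma lip_class_eq_iff:
  "lip_class (2,1,0,0) q = lip_class (2,1,0,0) q' \<longleftrightarrow> residue q = residue q'"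
  unfolding lip_class_def rcong_residue by auto

lemma cls_weight_le: "cls_weight (lip_class \<pi> q) \<le> lip_abs_sum q"
proof -
  obtain a b c d where "q = (a,b,c,d)" by (metis prod_cases4)
  then have "lip_diff q q = lip_mult (0,0,0,0) \<pi>"
    by (cases \<pi>) (simp add: lip_diff_def)
  then have "q \<in> lip_class \<pi> q" unfolding lip_class_def rcong_def by blast
  then show ?thesis unfolding cls_weight_def by (auto intro: Least_le)
qed

lemma packing_bound:
  assumes corr: "corrects \<pi> n C t"
    and fin: "finite (vcoset C ` Hpi_vec \<pi> n)"
    and S: "S \<subseteq> Hpi_vec \<pi> n" "\<forall>v\<in>S. vec_weight v \<le> t"
  shows "card S \<le> card (vcoset C ` Hpi_vec \<pi> n)"
proof -
  have "inj_on (vcoset C) S"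
    using corr S unfolding corrects_def by (meson inj_onI subsetD)
  then have "card S = card (vcoset C ` S)" by (simp add: card_image)
  also have "\<dots> \<le> card (vcoset C ` Hpi_vec \<pi> n)"
    using S(1) by (intro card_mono[OF fin]) auto
  finally show ?thesis .
qed

definition weight_lists :: "'a set \<Rightarrow> ('a \<Rightarrow> nat) \<Rightarrow> nat \<Rightarrow> nat \<Rightarrow> 'a list set" where
  "weight_lists K wt n w = {xs. length xs = n \<and> set xs \<subseteq> K \<and> sum_list (map wt xs) \<le> w}"

lemma finite_weight_lists:
  assumes "finite K" shows "finite (weight_lists K wt n w)"
  by (rule finite_subset[OF _ finite_lists_length_eq[OF assms, of n]])
     (auto simp: weight_lists_def)

lemma weight_lists_0: "weight_lists K wt 0 w = {[]}"
  by (auto simp: weight_lists_def)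

lemma weight_lists_Suc:
  "weight_lists K wt (Suc n) w =
     (\<lambda>(x,xs). x # xs) ` (SIGMA x:{x\<in>K. wt x \<le> w}. weight_lists K wt n (w - wt x))"
  (is "?L = ?R")
proof
  show "?L \<subseteq> ?R"
  proof
    fix ys assume "ys \<in> ?L"
    then obtain x xs where "ys = x # xs" "(x,xs) \<in> (SIGMA x:{x\<in>K. wt x \<le> w}. weight_lists K wt n (w - wt x))"
      unfolding weight_lists_def by (cases ys) auto
    then show "ys \<in> ?R" by force
  qed
qed (auto simp: weight_lists_def)

lemma card_weight_lists_Suc:
  assumes "finite K"
  shows "card (weight_lists K wt (Suc n) w) =
           (\<Sum>x\<in>K. if wt x \<le> w then card (weight_lists K wt n (w - wt x)) else 0)"
proof -
  have "inj_on (\<lambda>(x,xs). x # xs) (SIGMA x:{x\<in>K. wt x \<le> w}. weight_lists K wt n (w - wt x))"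
    by (auto simp: inj_on_def)
  then have "card (weight_lists K wt (Suc n) w) =
               card (SIGMA x:{x\<in>K. wt x \<le> w}. weight_lists K wt n (w - wt x))"
    unfolding weight_lists_Suc by (rule card_image)
  also have "\<dots> = (\<Sum>x\<in>{x\<in>K. wt x \<le> w}. card (weight_lists K wt n (w - wt x)))"
    using assms by (intro card_SigmaI) (auto simp: finite_weight_lists)
  finally show ?thesis by (simp add: sum.inter_filter[OF assms])
qed

text \<open>The residue pairs, weighted by the number of non-zero entries: one pair of
  weight 0, eight of weight 1, sixteen of weight 2.\<close>
definition residue_pairs :: "(nat \<times> nat) set" where
  "residue_pairs = {0,1,2,3,4} \<times> {0,1,2,3,4}"

fun pair_weight :: "nat \<times> nat \<Rightarrow> nat" where
  "pair_weight (a,b) = (if a = 0 then 0 else 1) + (if b = 0 then 0 else 1)"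

abbreviation pair_lists :: "nat \<Rightarrow> nat \<Rightarrow> (nat \<times> nat) list set" where
  "pair_lists \<equiv> weight_lists residue_pairs pair_weight"

lemma card_pair_lists:
  "card (pair_lists n 0) = 1 \<and> card (pair_lists n 1) = 1 + 8*n \<and>
   int (card (pair_lists n 2)) = 32 * int n ^ 2 - 8 * int n + 1"
proof (induction n)
  case 0 show ?case by (simp add: weight_lists_0)
next
  case (Suc n)
  have fin: "finite residue_pairs" by (simp add: residue_pairs_def)
  have "card (pair_lists (Suc n) 0) = card (pair_lists n 0)"
    and "card (pair_lists (Suc n) 1) = card (pair_lists n 1) + 8 * card (pair_lists n 0)"
    and "card (pair_lists (Suc n) 2) =
           card (pair_lists n 2) + 8 * card (pair_lists n 1) + 16 * card (pair_lists n 0)"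
    unfolding card_weight_lists_Suc[OF fin] by (simp_all add: residue_pairs_def)
  then show ?case using Suc.IH by (simp add: algebra_simps power2_eq_square)
qed

fun rep :: "nat \<times> nat \<Rightarrow> lip" where
  "rep (a,b) = lip_add
     (if a = 1 then (0,1,0,0) else if a = 2 then (1,0,0,0) else if a = 3 then (-1,0,0,0)
      else if a = 4 then (0,-1,0,0) else (0,0,0,0))
     (if b = 1 then (0,0,0,-1) else if b = 2 then (0,0,1,0) else if b = 3 then (0,0,-1,0)
      else if b = 4 then (0,0,0,1) else (0,0,0,0))"

lemma rep_props: "x \<in> residue_pairs \<Longrightarrow> residue (rep x) = x \<and> lip_abs_sum (rep x) = pair_weight x"
  unfolding residue_pairs_def by (elim SigmaE insertE; simp add: residue_def)

definition embed :: "(nat \<times> nat) list \<Rightarrow> lip set list" where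
  "embed xs = map (\<lambda>x. lip_class (2,1,0,0) (rep x)) xs"

lemma inj_on_embed: "inj_on embed (pair_lists n w)"
proof -
  have "inj_on (\<lambda>x. lip_class (2,1,0,0) (rep x)) residue_pairs"
    by (rule inj_onI) (metis lip_class_eq_iff rep_props)
  then show ?thesis unfolding embed_def weight_lists_def
    by (intro inj_onI) (auto elim!: map_inj_on intro: inj_on_subset)
qed

lemma embed_in_Hpi_vec: "xs \<in> pair_lists n w \<Longrightarrow> embed xs \<in> Hpi_vec (2,1,0,0) n"
  by (auto simp: embed_def weight_lists_def Hpi_vec_def Hpi_def)

lemma vec_weight_embed: "xs \<in> pair_lists n w \<Longrightarrow> vec_weight (embed xs) \<le> w"
proof -
  assume xs: "xs \<in> pair_lists n w"
  have "vec_weight (embed xs) = sum_list (map (\<lambda>x. cls_weight (lip_class (2,1,0,0) (rep x))) xs)"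
    by (simp add: vec_weight_def embed_def o_def)
  also have "\<dots> \<le> sum_list (map pair_weight xs)"
  proof (rule sum_list_mono)
    fix x assume "x \<in> set xs"
    then have "x \<in> residue_pairs" using xs by (auto simp: weight_lists_def)
    then show "cls_weight (lip_class (2,1,0,0) (rep x)) \<le> pair_weight x"
      using cls_weight_le[of "(2,1,0,0)" "rep x"] rep_props[of x] by simp
  qed
  also have "\<dots> \<le> w" using xs by (simp add: weight_lists_def)
  finally show ?thesis .
qed

theorem theorem8:
  fixes n k :: nat and C :: "lip set list set"
  assumes "k \<le> n"
    and "linear_code (2,1,0,0) n k C"
    and "corrects (2,1,0,0) n C 2"
  shows "((5::int)^2) ^ (n - k) \<ge> 32 * int n ^ 2 - 8 * int n + 1"
proof -
  let ?cosets = "vcoset C ` Hpi_vec (2,1,0,0) n"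
  have cosets: "int (card ?cosets) = ((5::int)^2) ^ (n - k)"
    using assms(2) unfolding linear_code_def by simp
  then have "finite ?cosets" by (metis card.infinite of_nat_0 power_not_zero zero_neq_numeral)
  then have "card (embed ` pair_lists n 2) \<le> card ?cosets"
    using assms(3) embed_in_Hpi_vec vec_weight_embed by (intro packing_bound) auto
  moreover have "card (embed ` pair_lists n 2) = card (pair_lists n 2)"
    by (rule card_image[OF inj_on_embed])
  ultimately show ?thesis using cosets card_pair_lists[of n] by linarith
qed

end
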